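(* Let $n \ge 2$. The minimum length of a solution to the $(n-1)$-out-of-$n$ picture-hanging puzzle on the nails $\{1,\dots,n\}$ is exactly $2n$, and this minimum is attained by the word \[ 1 + 2 + \cdots + n - 1 - 2 - \cdots - n. \]
   Context: Words are elements of the free group $F(V)$ on a finite set $V$ of generators ("nails"), written additively: $+$ is the (non-commutative) group operation, $-x$ the inverse, $0$ the identity (empty word); so $1+2+\cdots+n-1-2-\cdots-n$ denotes $x_1x_2\cdots x_n x_1^{-1}x_2^{-1}\cdots x_n^{-1}$. The length of an element is the number of letters (generators with sign) in its freely reduced word. For $S \subseteq V$, $w|_S$ denotes the image of $w$ under the homomorphism sending each generator in $S$ to $0$ and fixing the others. For $0 \le k \le n$ and $V=\{1,\dots,n\}$, a solution to the $k$-out-of-$n$ picture-hanging puzzle is a word $w \in F(V)$ such that for every $S \subseteq V$: $w|_S = 0$ if and only if $|S| \ge k$. *)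

theory Defs
  imports Main
begin

text \<open>Free group F(V) on generators of type nat. A letter is a generator with a sign
  (True = positive, False = inverse). Group elements are represented by freely reduced words.\<close>

type_synonym letter = "nat \<times> bool"
type_synonym word = "letter list"

definition inv_letter :: "letter \<Rightarrow> letter" where
  "inv_letter x = (fst x, \<not> snd x)"

fun reduced :: "word \<Rightarrow> bool" where
  "reduced [] = True"
| "reduced [x] = True"
| "reduced (x # y # ys) = (y \<noteq> inv_letter x \<and> reduced (y # ys))"

fun freduce :: "word \<Rightarrow> word" where
  "freduce [] = []"
| "freduce (x # xs) =
     (case freduce xs of
        [] \<Rightarrow> [x]
      | y # ys \<Rightarrow> (if y = inv_letter x then ys else x # y # ys))"

text \<open>w|_S: image under the homomorphism killing the generators in S (as a reduced word).\<close>
definition restrict_word :: "word \<Rightarrow> nat set \<Rightarrow> word" where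
  "restrict_word w S = freduce (filter (\<lambda>x. fst x \<notin> S) w)"

definition puzzle_solution :: "nat \<Rightarrow> nat \<Rightarrow> word \<Rightarrow> bool" where
  "puzzle_solution k n w \<longleftrightarrow>
     reduced w \<and> (\<forall>x \<in> set w. fst x \<in> {1..n}) \<and>
     (\<forall>S. S \<subseteq> {1..n} \<longrightarrow> (restrict_word w S = [] \<longleftrightarrow> card S \<ge> k))"

definition commutator_word :: "nat \<Rightarrow> word" where
  "commutator_word n = map (\<lambda>i. (i, True)) [1..<n+1] @ map (\<lambda>i. (i, False)) [1..<n+1]"

end

theory Submission
  imports Defs
begin

text \<open>In a \<open>k\<close>-out-of-\<open>n\<close> solution with \<open>0 < k < n\<close> every nail occurs at least twice, so the
  word has length at least \<open>2 n\<close>: a nail that does not occur cannot make the difference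
  between removing \<open>k - 1\<close> nails (picture stays) and removing those nails together with it
  (picture falls), and a nail that occurs once survives as a single letter when all \<open>n - 1 \<ge> k\<close>
  other nails are removed. Conversely, removing a set \<open>S\<close> of nails from the commutator word
  leaves the commutator word of the remaining nails, which cancels completely exactly when
  at most one nail remains, i.e. when \<open>card S \<ge> n - 1\<close>.\<close>

lemma freduce_reduced: "reduced w \<Longrightarrow> freduce w = w"
  by (induction w rule: reduced.induct) auto

lemma reduced_map_same_sign: "reduced (map (\<lambda>i. (i, b)) L)"
  by (induction L rule: induct_list012) (auto simp: inv_letter_def)

lemma reduced_append:
  assumes "reduced xs" "reduced (y # ys)" "xs \<noteq> [] \<Longrightarrow> y \<noteq> inv_letter (last xs)"
  shows "reduced (xs @ y # ys)"
  using assms by (induction xs rule: reduced.induct) auto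

definition commutator_of :: "nat list \<Rightarrow> word" where
  "commutator_of L = map (\<lambda>i. (i, True)) L @ map (\<lambda>i. (i, False)) L"

lemma commutator_word_eq: "commutator_word n = commutator_of [1..<n+1]"
  unfolding commutator_word_def commutator_of_def ..

lemma filter_commutator_of:
  "filter (\<lambda>x. fst x \<notin> S) (commutator_of L) = commutator_of (filter (\<lambda>i. i \<notin> S) L)"
  unfolding commutator_of_def by (simp add: filter_map comp_def)

lemma reduced_commutator_of:
  assumes "L \<noteq> []" "hd L \<noteq> last L"
  shows "reduced (commutator_of L)"
proof -
  obtain a rest where L: "L = a # rest"
    using assms(1) by (cases L) auto
  have "reduced (map (\<lambda>i. (i, True)) L @ (a, False) # map (\<lambda>i. (i, False)) rest)"
  proof (rule reduced_append)
    show "reduced (map (\<lambda>i. (i, True)) L)" by (rule reduced_map_same_sign)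
    show "reduced ((a, False) # map (\<lambda>i. (i, False)) rest)"
      using reduced_map_same_sign[of False "a # rest"] by simp
    show "(a, False) \<noteq> inv_letter (last (map (\<lambda>i. (i, True)) L))"
      using assms L by (auto simp: last_map inv_letter_def split: if_splits)
  qed
  then show ?thesis
    using L by (simp add: commutator_of_def)
qed

lemma freduce_commutator_of_eq_Nil_iff:
  assumes "distinct L"
  shows "freduce (commutator_of L) = [] \<longleftrightarrow> length L \<le> 1"
proof (cases L rule: remdups_adj.cases)
  case (3 a b rest)
  then have "hd L \<noteq> last L"
    using assms by (cases rest rule: rev_cases) auto
  with 3 have "freduce (commutator_of L) = commutator_of L"
    using freduce_reduced reduced_commutator_of by blast
  with 3 show ?thesis
    by (simp add: commutator_of_def)
qed (auto simp: commutator_of_def inv_letter_def)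

lemma length_filter_notin_upt:
  assumes "S \<subseteq> {1..n}"
  shows "length (filter (\<lambda>i. i \<notin> S) [1..<n+1]) = n - card S"
proof -
  have "length (filter (\<lambda>i. i \<notin> S) [1..<n+1]) = card ({i. i \<notin> S} \<inter> set [1..<n+1])"
    by (rule distinct_length_filter) simp
  also have "{i. i \<notin> S} \<inter> set [1..<n+1] = {1..n} - S"
    by auto
  also have "card \<dots> = n - card S"
    using assms by (simp add: card_Diff_subset finite_subset)
  finally show ?thesis .
qed

lemma commutator_word_solution:
  assumes "2 \<le> n"
  shows "puzzle_solution (n - 1) n (commutator_word n)"
  unfolding puzzle_solution_def
proof (intro conjI allI impI)
  have "[1..<n+1] \<noteq> []" "hd [1..<n+1] \<noteq> last [1..<n+1]"
    using assms by simp_all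
  then show "reduced (commutator_word n)"
    unfolding commutator_word_eq by (rule reduced_commutator_of)
  show "\<forall>x\<in>set (commutator_word n). fst x \<in> {1..n}"
    unfolding commutator_word_def by auto
  fix S :: "nat set"
  assume "S \<subseteq> {1..n}"
  define L where "L = filter (\<lambda>i. i \<notin> S) [1..<n+1]"
  have "length L = n - card S"
    unfolding L_def using \<open>S \<subseteq> {1..n}\<close> by (rule length_filter_notin_upt)
  moreover have "restrict_word (commutator_word n) S = freduce (commutator_of L)"
    unfolding restrict_word_def commutator_word_eq filter_commutator_of L_def ..
  moreover have "distinct L"
    unfolding L_def by simp
  ultimately show "restrict_word (commutator_word n) S = [] \<longleftrightarrow> n - 1 \<le> card S"
    using freduce_commutator_of_eq_Nil_iff by auto
qed

lemma restrict_word_insert_absent: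
  "i \<notin> fst ` set w \<Longrightarrow> restrict_word w (insert i S) = restrict_word w S"
  unfolding restrict_word_def by (intro arg_cong[where f = freduce] filter_cong) auto

lemma restrict_word_all_but_one:
  assumes "fst ` set w \<subseteq> V"
  shows "restrict_word w (V - {i}) = freduce (filter (\<lambda>x. fst x = i) w)"
  unfolding restrict_word_def using assms by (intro arg_cong[where f = freduce] filter_cong) auto

lemma puzzle_solution_nail_occurs_twice:
  assumes sol: "puzzle_solution k n w" and "0 < k" "k < n" and i: "i \<in> {1..n}"
  shows "2 \<le> count_list (map fst w) i"
proof (rule ccontr)
  have V: "fst ` set w \<subseteq> {1..n}"
    and falls: "\<And>S. S \<subseteq> {1..n} \<Longrightarrow> restrict_word w S = [] \<longleftrightarrow> k \<le> card S"
    using sol unfolding puzzle_solution_def by auto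
  assume "\<not> ?thesis"
  then consider "count_list (map fst w) i = 0" | "count_list (map fst w) i = 1"
    by linarith
  then show False
  proof cases
    case 1
    then have absent: "i \<notin> fst ` set w"
      by (simp add: count_list_0_iff)
    have "k - 1 \<le> card ({1..n} - {i})"
      using i \<open>k < n\<close> by simp
    then obtain S where S: "S \<subseteq> {1..n} - {i}" "card S = k - 1" "finite S"
      by (rule obtain_subset_with_card_n)
    have "i \<notin> S"
      using S by blast
    then have "card (insert i S) = k"
      using S \<open>0 < k\<close> by simp
    then have "restrict_word w (insert i S) = []"
      using falls[of "insert i S"] S i by auto
    moreover have "restrict_word w S \<noteq> []"
      using falls[of S] S \<open>0 < k\<close> by fastforce
    ultimately show False
      using restrict_word_insert_absent[OF absent] by simp
  next
    case 2
    then obtain x where "filter (\<lambda>x. fst x = i) w = [x]"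
      by (auto simp: count_list_eq_length_filter filter_map comp_def eq_commute[of i]
          length_Suc_conv)
    then have "restrict_word w ({1..n} - {i}) \<noteq> []"
      using restrict_word_all_but_one[OF V] by simp
    then show False
      using falls[of "{1..n} - {i}"] i \<open>k < n\<close> by simp
  qed
qed

lemma puzzle_solution_length_ge:
  assumes "puzzle_solution k n w" "0 < k" "k < n"
  shows "2 * n \<le> length w"
proof -
  have "2 * n = (\<Sum>i\<in>{1..n}. 2)"
    by simp
  also have "\<dots> \<le> (\<Sum>i\<in>{1..n}. count_list (map fst w) i)"
    using puzzle_solution_nail_occurs_twice[OF assms] by (intro sum_mono) auto
  also have "\<dots> = length w"
    using assms(1) by (subst sum_count_set) (auto simp: puzzle_solution_def)
  finally show ?thesis .
qed

theorem proposition2: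
  fixes n :: nat
  assumes "n \<ge> 2"
  shows "(\<forall>w. puzzle_solution (n - 1) n w \<longrightarrow> length w \<ge> 2 * n)
       \<and> puzzle_solution (n - 1) n (commutator_word n)
       \<and> length (commutator_word n) = 2 * n"
  using puzzle_solution_length_ge[of "n - 1" n] commutator_word_solution[OF assms] assms
  by (auto simp: commutator_word_def)

end
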